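(* Let $r\in(0,1)$ and let $W$ be a positive random variable (cascade multiplier) with scaling exponents $\zeta_p$ defined by $\mathbb{E}[W^p]=r^{\zeta_p}$. (a) Let $k\ge1$ be an integer and suppose there is $\beta\in(0,1)$ such that, with $\delta_p=\zeta_{p+k}-\zeta_p$, the limit $\delta_\infty=\lim_{p\to\infty}\delta_p$ exists and is finite and $\delta_{p+k}=(1-\beta)\delta_\infty+\beta\delta_p$ for all $p\in\{0,k,2k,\dots\}$. Then, with $\gamma=\delta_\infty/k$ and $C=(\delta_0-\delta_\infty)/(1-\beta)$, $$\ln\mathbb{E}[W^p]=(\gamma\ln r)p+C\ln r\,(1-\beta^{p/k}),$$ the second term is $o(p)$, the Carleman sum $\sum_{p\ge1}(\mathbb{E}[W^{2p}])^{-1/(2p)}$ diverges, and $W$ is moment-determinate. (b) If the exponents are quadratic, $\zeta_p=c_1p+c_2p^2$, so that $\mathbb{E}[W^p]=\exp(\mu p+\sigma^2p^2/2)$ with $\sigma^2>0$, then the Carleman sum $\sum_{p\ge1}(\mathbb{E}[W^{2p}])^{-1/(2p)}$ converges and $W$ is moment-indeterminate: multiple distinct distributions share the same moments.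
   Context: $\ln$ denotes the natural logarithm. *)

theory Defs
  imports "HOL-Probability.Probability" "HOL-Library.Landau_Symbols"
begin

definition moment_determinate :: "real measure \<Rightarrow> bool" where
  "moment_determinate \<mu> \<longleftrightarrow>
     (\<forall>\<nu>::real measure. prob_space \<nu> \<and> sets \<nu> = sets borel \<and>
        (\<forall>n::nat. integrable \<nu> (\<lambda>x. x ^ n) \<and>
                  integral\<^sup>L \<nu> (\<lambda>x. x ^ n) = integral\<^sup>L \<mu> (\<lambda>x. x ^ n))
        \<longrightarrow> \<nu> = \<mu>)"

end

theory Submission
  imports Defs
begin

(* If the increments zeta(p + k) - zeta(p) relax geometrically to dinf along p in kN, then
   zeta(nk) = n dinf + C (1 - beta^n), so E[W^(nk)] grows at most geometrically in n and
   Markov's inequality bounds W almost surely. A bounded distribution is determined by its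
   moments (the Taylor expansion of its characteristic function converges), and the Carleman
   terms of a bounded variable stay above 1/R, so their sum diverges.

   Quadratic exponents give the lognormal moments E[W^n] = exp(a n + b n^2) with b > 0, whose
   Carleman terms form a geometric series. The same moments belong to every lattice
   distribution with mass proportional to exp(-b (k + t)^2) at exp(a + 2 b (k + t)), k in Z:
   multiplying by the n-th power of the atom only shifts t by n. The shifts t = 0 and t = 1/2
   give distinct distributions, so W is moment-indeterminate. *)

lemma bounded_in_smallo_id:
  fixes f :: "real \<Rightarrow> real"
  assumes "\<forall>\<^sub>F p in at_top. \<bar>f p\<bar> \<le> B"
  shows "f \<in> o(\<lambda>p. p)"
proof (rule landau_o.big_small_trans)
  show "f \<in> O(\<lambda>_. 1)"
    using assms by (intro bigoI[where c = B]) auto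
  have "((\<lambda>p. inverse p :: real) \<longlongrightarrow> 0) at_top"
    by (rule tendsto_inverse_0_at_top[OF filterlim_ident])
  then show "(\<lambda>_. 1) \<in> o(\<lambda>p::real. p)"
    by (intro smalloI_tendsto) (auto simp: divide_inverse eventually_gt_at_top[of 0] elim: eventually_mono)
qed

lemma powr_correction_in_smallo_id:
  fixes k :: real
  assumes "0 < \<beta>" "\<beta> < 1" "0 < k"
  shows "(\<lambda>p. c * (1 - \<beta> powr (p / k))) \<in> o(\<lambda>p. p)"
proof (rule bounded_in_smallo_id)
  show "\<forall>\<^sub>F p in at_top. \<bar>c * (1 - \<beta> powr (p / k))\<bar> \<le> \<bar>c\<bar>"
    using eventually_ge_at_top[of 0]
  proof eventually_elim
    case (elim p)
    have "\<beta> powr (p / k) \<le> 1"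
      using assms elim by (intro powr_le1) auto
    then have "\<bar>1 - \<beta> powr (p / k)\<bar> \<le> 1" by simp
    then show ?case by (simp add: abs_mult mult_left_le)
  qed
qed

lemma increments_affine_recurrence_closed_form:
  fixes z :: "nat \<Rightarrow> real"
  assumes "z 0 = 0" and "\<beta> \<noteq> 1"
    and rec: "\<And>n. z (n + 2) - z (n + 1) = (1 - \<beta>) * d + \<beta> * (z (n + 1) - z n)"
  shows "z n = real n * d + (z 1 - d) / (1 - \<beta>) * (1 - \<beta> ^ n)"
proof -
  have increment: "z (n + 1) - z n = d + \<beta> ^ n * (z 1 - d)" for n
  proof (induction n)
    case (Suc n)
    have "z (Suc n + 1) - z (Suc n) = (1 - \<beta>) * d + \<beta> * (z (n + 1) - z n)"
      using rec[of n] by simp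
    also have "\<dots> = d + \<beta> ^ Suc n * (z 1 - d)"
      unfolding Suc by (simp add: algebra_simps)
    finally show ?case .
  qed (use assms in simp)
  show ?thesis
  proof (induction n)
    case (Suc n)
    have "z (Suc n) = z n + d + \<beta> ^ n * (z 1 - d)"
      using increment[of n] by simp
    then show ?case
      using Suc \<open>\<beta> \<noteq> 1\<close> by (simp add: field_simps)
  qed (use assms in simp)
qed


section \<open>Bounded distributions\<close>

lemma (in prob_space) integrable_power_if_AE_abs_le:
  fixes X :: "'a \<Rightarrow> real"
  assumes [measurable]: "X \<in> borel_measurable M" and "AE x in M. \<bar>X x\<bar> \<le> R"
  shows "integrable M (\<lambda>x. X x ^ n)"
  by (rule integrable_const_bound[where B = "R ^ n"])
     (use assms(2) in \<open>auto elim!: eventually_mono simp: power_abs intro: power_mono\<close>)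

lemma (in prob_space) expectation_power_le_if_AE_abs_le:
  fixes X :: "'a \<Rightarrow> real"
  assumes [measurable]: "X \<in> borel_measurable M" and bound: "AE x in M. \<bar>X x\<bar> \<le> R"
  shows "expectation (\<lambda>x. X x ^ n) \<le> R ^ n"
proof -
  have "expectation (\<lambda>x. X x ^ n) \<le> expectation (\<lambda>x. R ^ n)"
  proof (rule integral_mono_AE)
    show "AE x in M. X x ^ n \<le> R ^ n"
      using bound
    proof eventually_elim
      case (elim x)
      have "X x ^ n \<le> \<bar>X x\<bar> ^ n" by (metis power_abs abs_ge_self)
      also have "\<dots> \<le> R ^ n" using elim by (intro power_mono) auto
      finally show ?case .
    qed
  qed (use integrable_power_if_AE_abs_le[OF assms] in auto)
  then show ?thesis by (simp add: prob_space)
qed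

lemma power_even_over_fact_tendsto_zero:
  fixes x :: real
  shows "(\<lambda>j. x ^ (2 * j) / fact (2 * j)) \<longlonglongrightarrow> 0"
proof -
  have "(\<lambda>n. x ^ n / fact n) \<longlonglongrightarrow> 0"
    using summable_LIMSEQ_zero[OF summable_exp[of x]] by (simp add: field_simps)
  then show ?thesis
    by (rule LIMSEQ_subseq_LIMSEQ[unfolded o_def]) (simp add: strict_mono_def)
qed

lemma (in real_distribution) moment_determinate_if_AE_abs_le:
  assumes bound: "AE x in M. \<bar>x\<bar> \<le> R"
  shows "moment_determinate M"
  unfolding moment_determinate_def
proof (intro allI impI)
  fix \<nu> :: "real measure"
  assume \<nu>: "prob_space \<nu> \<and> sets \<nu> = sets borel \<and>
    (\<forall>n. integrable \<nu> (\<lambda>x. x ^ n) \<and> integral\<^sup>L \<nu> (\<lambda>x. x ^ n) = expectation (\<lambda>x. x ^ n))"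
  then interpret \<nu>: real_distribution \<nu>
    by (simp add: real_distribution_def real_distribution_axioms_def)
  have integrable: "integrable M (\<lambda>x. x ^ n)" for n
    using integrable_power_if_AE_abs_le[of "\<lambda>x. x"] bound by simp
  have even_moment_le: "expectation (\<lambda>x. \<bar>x\<bar> ^ (2 * j)) \<le> R ^ (2 * j)"
    and even_moment_le_\<nu>: "\<nu>.expectation (\<lambda>x. \<bar>x\<bar> ^ (2 * j)) \<le> R ^ (2 * j)" for j
    using expectation_power_le_if_AE_abs_le[of "\<lambda>x. x"] bound \<nu>
    by (simp_all add: power_even_abs)
  have "char \<nu> t = char M t" for t
  proof -
    define taylor where
      "taylor n = (\<Sum>k\<le>n. (\<i> * t) ^ k / fact k * expectation (\<lambda>x. x ^ k))" for n
    define remainder where "remainder j = 2 * \<bar>t\<bar> ^ (2 * j) / fact (2 * j) * R ^ (2 * j)" for j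
    have dist_le: "cmod (char \<nu> t - char M t) \<le> 2 * remainder j" for j
    proof -
      have c: "0 \<le> 2 * \<bar>t\<bar> ^ (2 * j) / fact (2 * j)" by simp
      have "cmod (char \<nu> t - taylor (2 * j)) \<le> remainder j"
        using \<nu>.char_approx1[of "2 * j" t] \<nu> mult_left_mono[OF even_moment_le_\<nu>[of j] c]
        unfolding taylor_def remainder_def by auto
      moreover have "cmod (char M t - taylor (2 * j)) \<le> remainder j"
        using char_approx1[of "2 * j" t] integrable mult_left_mono[OF even_moment_le[of j] c]
        unfolding taylor_def remainder_def by auto
      ultimately show ?thesis
        using norm_triangle_ineq4[of "char \<nu> t - taylor (2 * j)" "char M t - taylor (2 * j)"]
        by simp
    qed
    have "(\<lambda>j. 4 * ((\<bar>t\<bar> * R) ^ (2 * j) / fact (2 * j))) \<longlonglongrightarrow> 0"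
      by (intro tendsto_mult_right_zero power_even_over_fact_tendsto_zero)
    then have "(\<lambda>j. 2 * remainder j) \<longlonglongrightarrow> 0"
      unfolding remainder_def by (simp add: field_simps)
    then have "cmod (char \<nu> t - char M t) \<le> 0"
      by (rule LIMSEQ_le_const) (use dist_le in auto)
    then show ?thesis by simp
  qed
  then show "\<nu> = M"
    by (intro Levy_uniqueness \<nu>.real_distribution_axioms real_distribution_axioms) auto
qed

lemma (in prob_space) moment_determinate_distr_if_AE_abs_le:
  assumes [measurable]: "random_variable borel X" and bound: "AE x in M. \<bar>X x\<bar> \<le> R"
  shows "moment_determinate (distr M borel X)"
proof (rule real_distribution.moment_determinate_if_AE_abs_le)
  show "real_distribution (distr M borel X)" by simp
  show "AE x in distr M borel X. \<bar>x\<bar> \<le> R"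
    using bound by (subst AE_distr_iff) auto
qed

lemma (in prob_space) AE_less_if_moments_le_geometric:
  fixes X :: "'a \<Rightarrow> real"
  assumes [measurable]: "X \<in> borel_measurable M" and nonneg: "AE x in M. 0 \<le> X x"
    and integrable: "\<And>n. integrable M (\<lambda>x. X x ^ n)"
    and moments: "\<And>n. expectation (\<lambda>x. X x ^ n) \<le> A * \<rho> ^ n"
    and "0 \<le> \<rho>" "\<rho> < R"
  shows "AE x in M. X x < R"
proof -
  have "0 < R" using assms by linarith
  have tail: "prob {x \<in> space M. R \<le> X x} \<le> A * (\<rho> / R) ^ n" for n
  proof -
    have "prob {x \<in> space M. R \<le> X x} \<le> prob {x \<in> space M. R ^ n \<le> X x ^ n}"
      using \<open>0 < R\<close> by (intro finite_measure_mono) (auto intro: power_mono)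
    also have "\<dots> \<le> expectation (\<lambda>x. X x ^ n) / R ^ n"
      using nonneg \<open>0 < R\<close>
      by (intro integral_Markov_inequality_measure[where A = "space M"] integrable) auto
    also have "\<dots> \<le> A * \<rho> ^ n / R ^ n"
      using moments \<open>0 < R\<close> by (intro divide_right_mono) auto
    finally show ?thesis by (simp add: power_divide)
  qed
  have "(\<lambda>n. A * (\<rho> / R) ^ n) \<longlonglongrightarrow> 0"
    using assms \<open>0 < R\<close> by (intro tendsto_mult_right_zero LIMSEQ_power_zero) auto
  then have "prob {x \<in> space M. R \<le> X x} \<le> 0"
    by (rule LIMSEQ_le_const) (use tail in auto)
  then have "{x \<in> space M. R \<le> X x} \<in> null_sets M"
    by (auto simp: null_sets_def emeasure_eq_measure order.antisym)
  then show ?thesis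
    by (rule AE_I') auto
qed

lemma not_summable_carleman_if_moments_le_power:
  fixes m :: "nat \<Rightarrow> real"
  assumes pos: "\<And>n. 0 < m n" and le: "\<And>n. m n \<le> R ^ n"
  shows "\<not> summable (\<lambda>p. m (2 * (p + 1)) powr (- 1 / (2 * real (p + 1))))"
proof
  have "0 < R" using pos[of 1] le[of 1] by simp
  have term_ge: "1 / R \<le> m (2 * (p + 1)) powr (- 1 / (2 * real (p + 1)))" for p
  proof -
    have "(R ^ (2 * (p + 1))) powr (- 1 / (2 * real (p + 1)))
        = R powr (real (2 * (p + 1)) * (- 1 / (2 * real (p + 1))))"
      using \<open>0 < R\<close> by (simp only: powr_realpow[symmetric] powr_powr)
    also have "\<dots> = 1 / R"
      using \<open>0 < R\<close> by (simp add: powr_minus_divide)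
    finally have "1 / R = (R ^ (2 * (p + 1))) powr (- 1 / (2 * real (p + 1)))" ..
    also have "\<dots> \<le> m (2 * (p + 1)) powr (- 1 / (2 * real (p + 1)))"
      using pos[of "2 * (p + 1)"] le[of "2 * (p + 1)"]
      by (intro powr_mono2') (auto simp: divide_nonpos_pos simp del: power_Suc mult_Suc_right)
    finally show ?thesis .
  qed
  assume "summable (\<lambda>p. m (2 * (p + 1)) powr (- 1 / (2 * real (p + 1))))"
  then have "1 / R \<le> 0"
    by (intro LIMSEQ_le_const[OF summable_LIMSEQ_zero]) (use term_ge in auto)
  with \<open>0 < R\<close> show False by simp
qed


section \<open>Lognormal moments on a lattice\<close>

lemma summable_carleman_lognormal:
  fixes a b :: real
  assumes "0 < b"
  shows "summable (\<lambda>p. exp (a * real (2 * (p + 1)) + b * real (2 * (p + 1)) ^ 2)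
                           powr (- 1 / (2 * real (p + 1))))"
proof -
  have "exp (a * real (2 * (p + 1)) + b * real (2 * (p + 1)) ^ 2) powr (- 1 / (2 * real (p + 1)))
      = exp (- a - 2 * b) * exp (- 2 * b) ^ p" for p
  proof -
    have "(- 1 / (2 * real (p + 1))) * (a * real (2 * (p + 1)) + b * real (2 * (p + 1)) ^ 2)
        = (- a - 2 * b) + real p * (- 2 * b)"
      by (simp add: field_simps power2_eq_square)
    then show ?thesis
      by (simp add: exp_powr_real mult.commute exp_add[symmetric] exp_of_nat_mult[symmetric])
  qed
  then show ?thesis
    using assms by (simp only:) (intro summable_mult summable_geometric, simp)
qed

lemma abs_summable_on_int_if_le_geometric:
  fixes f :: "int \<Rightarrow> real"
  assumes "0 \<le> q" "q < 1" and le: "\<And>k. \<bar>f k\<bar> \<le> C * q ^ nat \<bar>k\<bar>"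
  shows "Infinite_Set_Sum.abs_summable_on f UNIV"
proof -
  have half: "Infinite_Set_Sum.abs_summable_on f (range g)"
    if "inj g" and "\<And>n. nat \<bar>g n\<bar> = n" for g :: "nat \<Rightarrow> int"
  proof -
    have "summable (\<lambda>n. C * q ^ n)"
      using assms by (intro summable_mult summable_geometric) auto
    then have "summable (\<lambda>n. norm (f (g n)))"
      by (rule summable_comparison_test'[where N = 0]) (metis le norm_ge_zero real_norm_def abs_of_nonneg that(2))
    then show ?thesis
      using abs_summable_on_reindex_iff[OF \<open>inj g\<close>, of f] by (simp add: abs_summable_on_nat_iff')
  qed
  have "range int \<union> range (\<lambda>n. - int n) = UNIV"
  proof (intro set_eqI iffI)
    fix k :: int
    show "k \<in> range int \<union> range (\<lambda>n. - int n)"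
      by (cases "0 \<le> k") (auto intro!: image_eqI[of _ _ "nat \<bar>k\<bar>"])
  qed simp
  moreover have "Infinite_Set_Sum.abs_summable_on f (range int)"
    and "Infinite_Set_Sum.abs_summable_on f (range (\<lambda>n. - int n))"
    by (auto intro!: half simp: inj_def)
  ultimately show ?thesis
    by (metis abs_summable_on_union)
qed

definition gauss_weight :: "real \<Rightarrow> real \<Rightarrow> int \<Rightarrow> real" where
  "gauss_weight b t k = exp (- b * (real_of_int k + t)\<^sup>2)"

lemma gauss_weight_pos: "0 < gauss_weight b t k"
  by (simp add: gauss_weight_def)

lemma abs_summable_gauss_weight:
  assumes "0 < b"
  shows "Infinite_Set_Sum.abs_summable_on (gauss_weight b t) UNIV"
proof (rule abs_summable_on_int_if_le_geometric)
  fix k :: int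
  define x where "x = real_of_int k"
  have "\<bar>x\<bar> \<le> 2 * (x + t)\<^sup>2 + 2 * t\<^sup>2 + 1 / 4"
  proof -
    have "0 \<le> (\<bar>x\<bar> - 1 / 2)\<^sup>2 + (x + 2 * t)\<^sup>2" by simp
    then show ?thesis by (simp add: power2_eq_square algebra_simps)
  qed
  then have "b / 2 * \<bar>x\<bar> \<le> b / 2 * (2 * (x + t)\<^sup>2 + 2 * t\<^sup>2 + 1 / 4)"
    using assms by (intro mult_left_mono) auto
  then have "- b * (x + t)\<^sup>2 \<le> (b * t\<^sup>2 + b / 8) + real (nat \<bar>k\<bar>) * (- b / 2)"
    unfolding x_def by (simp add: algebra_simps)
  then show "\<bar>gauss_weight b t k\<bar> \<le> exp (b * t\<^sup>2 + b / 8) * exp (- b / 2) ^ nat \<bar>k\<bar>"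
    unfolding gauss_weight_def x_def by (simp add: exp_add[symmetric] exp_of_nat_mult[symmetric])
qed (use assms in auto)

lemma infsetsum_gauss_weight_pos:
  assumes "0 < b"
  shows "0 < infsetsum (gauss_weight b t) UNIV"
proof -
  have "infsetsum (gauss_weight b t) UNIV
      = infsetsum (gauss_weight b t) (UNIV - {0}) + gauss_weight b t 0"
    using infsetsum_Diff[OF abs_summable_gauss_weight[OF assms], of "{0}"] by simp
  moreover have "0 \<le> infsetsum (gauss_weight b t) (UNIV - {0})"
    by (intro infsetsum_nonneg less_imp_le[OF gauss_weight_pos])
  ultimately show ?thesis
    using gauss_weight_pos[of b t 0] by linarith
qed

lemma infsetsum_gauss_weight_shift:
  "infsetsum (gauss_weight b (t + real_of_int j)) UNIV = infsetsum (gauss_weight b t) UNIV"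
proof -
  have "bij_betw (\<lambda>k. k + j) UNIV UNIV"
    by (rule bij_betwI[where g = "\<lambda>k. k - j"]) auto
  then have "infsetsum (\<lambda>k. gauss_weight b t (k + j)) UNIV = infsetsum (gauss_weight b t) UNIV"
    by (rule infsetsum_reindex_bij_betw)
  then show ?thesis
    by (simp add: gauss_weight_def algebra_simps)
qed

definition gauss_lattice :: "real \<Rightarrow> real \<Rightarrow> int measure" where
  "gauss_lattice b t = density (count_space UNIV)
     (\<lambda>k. ennreal (gauss_weight b t k / infsetsum (gauss_weight b t) UNIV))"

lemma space_gauss_lattice [simp]: "space (gauss_lattice b t) = UNIV"
  by (simp add: gauss_lattice_def)

lemma measurable_gauss_lattice [measurable]: "f \<in> borel_measurable (gauss_lattice b t)"
  by (simp add: gauss_lattice_def)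

lemma prob_space_gauss_lattice:
  assumes "0 < b"
  shows "prob_space (gauss_lattice b t)"
proof
  let ?S = "infsetsum (gauss_weight b t) UNIV"
  have "emeasure (gauss_lattice b t) (space (gauss_lattice b t))
      = (\<integral>\<^sup>+ k. ennreal (gauss_weight b t k / ?S) \<partial>count_space UNIV)"
    by (simp add: gauss_lattice_def emeasure_density)
  also have "\<dots> = ennreal (infsetsum (\<lambda>k. gauss_weight b t k / ?S) UNIV)"
    using abs_summable_on_cmult_left[OF abs_summable_gauss_weight[OF assms, of t], where c = "inverse ?S"]
      infsetsum_gauss_weight_pos[OF assms, of t] gauss_weight_pos[of b t]
    by (intro nn_integral_conv_infsetsum) (auto simp: divide_inverse less_imp_le)
  also have "infsetsum (\<lambda>k. gauss_weight b t k / ?S) UNIV = 1"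
    using abs_summable_gauss_weight[OF assms] infsetsum_gauss_weight_pos[OF assms, of t]
    by (subst infsetsum_cdiv) auto
  finally show "emeasure (gauss_lattice b t) (space (gauss_lattice b t)) = 1"
    by simp
qed

lemma emeasure_gauss_lattice_singleton:
  "emeasure (gauss_lattice b t) {k} = ennreal (gauss_weight b t k / infsetsum (gauss_weight b t) UNIV)"
  by (simp add: gauss_lattice_def emeasure_density)

definition lattice_lognormal :: "real \<Rightarrow> real \<Rightarrow> real \<Rightarrow> real measure" where
  "lattice_lognormal b a t =
     distr (gauss_lattice b t) borel (\<lambda>k. exp (a + 2 * b * (real_of_int k + t)))"

lemma real_distribution_lattice_lognormal:
  assumes "0 < b"
  shows "real_distribution (lattice_lognormal b a t)"
  unfolding lattice_lognormal_def
  by (rule prob_space.real_distribution_distr[OF prob_space_gauss_lattice[OF assms]]) simp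

lemma gauss_weight_mult_exp_power:
  "gauss_weight b t k * exp (a + 2 * b * (real_of_int k + t)) ^ n
     = exp (a * real n + b * real n ^ 2) * gauss_weight b (t - real n) k"
proof -
  have "- b * (real_of_int k + t)\<^sup>2 + real n * (a + 2 * b * (real_of_int k + t))
      = (a * real n + b * real n ^ 2) + - b * (real_of_int k + (t - real n))\<^sup>2"
    by (simp add: power2_eq_square algebra_simps)
  then show ?thesis
    by (simp add: gauss_weight_def exp_of_nat_mult[symmetric] exp_add[symmetric])
qed

lemma lattice_lognormal_moments:
  assumes "0 < b"
  shows "integrable (lattice_lognormal b a t) (\<lambda>x. x ^ n)"
    and "integral\<^sup>L (lattice_lognormal b a t) (\<lambda>x. x ^ n) = exp (a * real n + b * real n ^ 2)"
proof -
  define S where "S = infsetsum (gauss_weight b t) UNIV"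
  define y where "y k = exp (a + 2 * b * (real_of_int k + t))" for k
  have "0 < S"
    unfolding S_def by (rule infsetsum_gauss_weight_pos[OF assms])
  have weighted: "gauss_weight b t k / S * y k ^ n
      = exp (a * real n + b * real n ^ 2) / S * gauss_weight b (t - real n) k" for k
    using gauss_weight_mult_exp_power[of b t k a n] unfolding y_def by (simp add: field_simps)
  have nonneg: "AE k in count_space UNIV. 0 \<le> gauss_weight b t k / S"
    using \<open>0 < S\<close> gauss_weight_pos[of b t] by (simp add: less_imp_le)
  have "integrable (count_space UNIV) (\<lambda>k. gauss_weight b t k / S * y k ^ n)"
    unfolding weighted using abs_summable_gauss_weight[OF assms]
    by (intro integrable_mult_right) (simp add: abs_summable_on_def)
  then have "integrable (gauss_lattice b t) (\<lambda>k. y k ^ n)"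
    unfolding gauss_lattice_def S_def[symmetric] using nonneg by (simp add: integrable_density)
  then show "integrable (lattice_lognormal b a t) (\<lambda>x. x ^ n)"
    unfolding lattice_lognormal_def y_def by (subst integrable_distr_eq) auto
  have "integral\<^sup>L (lattice_lognormal b a t) (\<lambda>x. x ^ n) = integral\<^sup>L (gauss_lattice b t) (\<lambda>k. y k ^ n)"
    unfolding lattice_lognormal_def y_def by (subst integral_distr) auto
  also have "\<dots> = infsetsum (\<lambda>k. gauss_weight b t k / S * y k ^ n) UNIV"
    unfolding gauss_lattice_def S_def[symmetric] using nonneg
    by (simp add: integral_density infsetsum_def)
  also have "\<dots> = exp (a * real n + b * real n ^ 2) / S * infsetsum (gauss_weight b (t - real n)) UNIV"
    unfolding weighted by (rule infsetsum_cmult_right) (rule abs_summable_gauss_weight[OF assms])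
  also have "infsetsum (gauss_weight b (t - real n)) UNIV = S"
    using infsetsum_gauss_weight_shift[of b "t - real n" "int n"] by (simp add: S_def)
  finally show "integral\<^sup>L (lattice_lognormal b a t) (\<lambda>x. x ^ n) = exp (a * real n + b * real n ^ 2)"
    using \<open>0 < S\<close> by simp
qed

lemma emeasure_lattice_lognormal_unshifted:
  assumes "0 < b"
  shows "emeasure (lattice_lognormal b a 0) {exp a} \<noteq> 0"
proof -
  have "(\<lambda>k. exp (a + 2 * b * (real_of_int k + 0))) -` {exp a} = {0}"
    using assms by auto
  then have "emeasure (lattice_lognormal b a 0) {exp a} = emeasure (gauss_lattice b 0) {0}"
    unfolding lattice_lognormal_def by (subst emeasure_distr) auto
  then show ?thesis
    using gauss_weight_pos[of b 0 0] infsetsum_gauss_weight_pos[OF assms, of 0]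
    by (simp add: emeasure_gauss_lattice_singleton)
qed

lemma emeasure_lattice_lognormal_half_shifted:
  assumes "0 < b"
  shows "emeasure (lattice_lognormal b a (1 / 2)) {exp a} = 0"
proof -
  have "real_of_int k + 1 / 2 \<noteq> 0" for k :: int
  proof
    assume "real_of_int k + 1 / 2 = 0"
    then have "real_of_int (2 * k + 1) = 0" by simp
    then show False by presburger
  qed
  then have "(\<lambda>k. exp (a + 2 * b * (real_of_int k + 1 / 2))) -` {exp a} = {}"
    using assms by auto
  then show ?thesis
    unfolding lattice_lognormal_def by (subst emeasure_distr) auto
qed

lemma not_moment_determinate_if_lognormal_moments:
  assumes "0 < b" and moments: "\<And>n. integral\<^sup>L \<mu> (\<lambda>x. x ^ n) = exp (a * real n + b * real n ^ 2)"
  shows "\<not> moment_determinate \<mu>"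
proof
  assume "moment_determinate \<mu>"
  then have "lattice_lognormal b a t = \<mu>" for t
    unfolding moment_determinate_def
    using real_distribution_lattice_lognormal[OF assms(1), of a t]
      lattice_lognormal_moments[OF assms(1)] moments
    by (auto simp: real_distribution_def real_distribution_axioms_def)
  then have "lattice_lognormal b a 0 = lattice_lognormal b a (1 / 2)"
    by simp
  then show False
    using emeasure_lattice_lognormal_unshifted[OF assms(1)]
      emeasure_lattice_lognormal_half_shifted[OF assms(1)] by metis
qed


section \<open>Cascade multipliers\<close>

locale cascade_multiplier = prob_space M for M :: "'a measure" +
  fixes W :: "'a \<Rightarrow> real" and r :: real and \<zeta> :: "real \<Rightarrow> real"
  assumes W_measurable [measurable]: "W \<in> borel_measurable M"
    and W_pos: "\<And>x. x \<in> space M \<Longrightarrow> 0 < W x"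
    and r_pos: "0 < r" and r_less_1: "r < 1"
    and integrable_powr: "\<And>p. 0 \<le> p \<Longrightarrow> integrable M (\<lambda>x. W x powr p)"
    and expectation_powr: "\<And>p. 0 \<le> p \<Longrightarrow> expectation (\<lambda>x. W x powr p) = r powr \<zeta> p"
begin

lemma powr_eq_power: "x \<in> space M \<Longrightarrow> W x powr real n = W x ^ n"
  using W_pos by (simp add: powr_realpow)

lemma integrable_power: "integrable M (\<lambda>x. W x ^ n)"
proof -
  have "integrable M (\<lambda>x. W x powr real n)"
    by (rule integrable_powr) simp
  then show ?thesis
    by (rule Bochner_Integration.integrable_cong[THEN iffD1, rotated -1]) (simp_all add: powr_eq_power)
qed

lemma expectation_power: "expectation (\<lambda>x. W x ^ n) = r powr \<zeta> (real n)"
  using expectation_powr[of "real n"] by (simp add: powr_eq_power cong: Bochner_Integration.integral_cong)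

lemma zeta_0: "\<zeta> 0 = 0"
  using expectation_power[of 0] r_pos r_less_1 by (simp add: prob_space)

lemma ln_expectation_powr: "0 \<le> p \<Longrightarrow> ln (expectation (\<lambda>x. W x powr p)) = \<zeta> p * ln r"
  using r_pos by (simp add: expectation_powr)

lemma zeta_multiples_closed_form:
  assumes "\<beta> \<noteq> 1"
    and "\<forall>n::nat. \<zeta> (real ((n + 1) * k) + real k) - \<zeta> (real ((n + 1) * k))
                 = (1 - \<beta>) * d + \<beta> * (\<zeta> (real (n * k) + real k) - \<zeta> (real (n * k)))"
  shows "\<zeta> (real (n * k)) = real n * d + (\<zeta> (real k) - d) / (1 - \<beta>) * (1 - \<beta> ^ n)"
  using increments_affine_recurrence_closed_form[of "\<lambda>n. \<zeta> (real (n * k))" \<beta> d n] assms zeta_0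
  by (simp add: algebra_simps)

lemma AE_bounded_if_zeta_linear_lower_bound:
  assumes "1 \<le> k" and lower: "\<And>n. real n * d - c \<le> \<zeta> (real (n * k))"
  shows "\<exists>R. AE x in M. \<bar>W x\<bar> \<le> R"
proof -
  define \<rho> where "\<rho> = r powr d"
  have "0 \<le> \<rho>" by (simp add: \<rho>_def)
  have "expectation (\<lambda>x. (W x ^ k) ^ n) \<le> r powr (- c) * \<rho> ^ n" for n
  proof -
    have "expectation (\<lambda>x. (W x ^ k) ^ n) = r powr \<zeta> (real (n * k))"
      by (simp add: expectation_power flip: power_mult mult.commute)
    also have "\<dots> \<le> r powr (real n * d - c)"
      using lower r_pos r_less_1 by (intro powr_mono') auto
    also have "\<dots> = r powr (- c) * \<rho> ^ n"
      using r_pos by (simp add: \<rho>_def powr_diff powr_minus_divide powr_realpow[symmetric] powr_powr mult.commute)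
    finally show ?thesis .
  qed
  then have "AE x in M. W x ^ k < \<rho> + 1"
    using W_pos
    by (intro AE_less_if_moments_le_geometric[where A = "r powr (- c)" and \<rho> = \<rho>] AE_I2)
       (auto simp: \<open>0 \<le> \<rho>\<close> integrable_power less_imp_le simp flip: power_mult)
  then have "AE x in M. \<bar>W x\<bar> \<le> \<rho> + 1"
  proof (rule AE_mp, intro AE_I2 impI)
    fix x assume "x \<in> space M" and "W x ^ k < \<rho> + 1"
    moreover have "W x \<le> W x ^ k" if "1 \<le> W x"
      using power_increasing[OF \<open>1 \<le> k\<close> that] by simp
    ultimately show "\<bar>W x\<bar> \<le> \<rho> + 1"
      using W_pos[of x] \<open>0 \<le> \<rho>\<close> by (cases "1 \<le> W x") auto
  qed
  then show ?thesis ..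
qed

lemma AE_bounded_if_zeta_multiples_closed_form:
  assumes "1 \<le> k" "0 \<le> \<beta>" "\<beta> \<le> 1"
    and zeta: "\<And>n. \<zeta> (real (n * k)) = real n * d + C * (1 - \<beta> ^ n)"
  shows "\<exists>R. AE x in M. \<bar>W x\<bar> \<le> R"
proof (rule AE_bounded_if_zeta_linear_lower_bound[OF \<open>1 \<le> k\<close>])
  fix n
  have "\<bar>C * (1 - \<beta> ^ n)\<bar> \<le> \<bar>C\<bar>"
    using assms by (simp add: abs_mult mult_left_le power_le_one)
  then show "real n * d - \<bar>C\<bar> \<le> \<zeta> (real (n * k))"
    unfolding zeta by linarith
qed

lemma ln_expectation_powr_multiples:
  assumes "1 \<le> k" "0 < \<beta>"
    and zeta: "\<And>n. \<zeta> (real (n * k)) = real n * d + C * (1 - \<beta> ^ n)"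
  shows "ln (expectation (\<lambda>x. W x powr real (n * k)))
           = d / real k * ln r * real (n * k) + C * ln r * (1 - \<beta> powr (real (n * k) / real k))"
proof -
  have "\<beta> powr (real (n * k) / real k) = \<beta> ^ n"
    using assms by (simp add: powr_realpow)
  then show ?thesis
    unfolding ln_expectation_powr[OF of_nat_0_le_iff] zeta using assms by (simp add: field_simps)
qed

lemma not_summable_carleman_if_AE_bounded:
  assumes "AE x in M. \<bar>W x\<bar> \<le> R"
  shows "\<not> summable (\<lambda>p. expectation (\<lambda>x. W x ^ (2 * (p + 1))) powr (- 1 / (2 * real (p + 1))))"
  using r_pos expectation_power_le_if_AE_abs_le[OF W_measurable assms]
  by (intro not_summable_carleman_if_moments_le_power) (auto simp: expectation_power)

lemma integral_distr_power: "integral\<^sup>L (distr M borel W) (\<lambda>x. x ^ n) = expectation (\<lambda>x. W x ^ n)"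
  by (rule integral_distr) auto

lemma expectation_power_if_zeta_quadratic:
  assumes "\<forall>p\<ge>0. \<zeta> p = c\<^sub>1 * p + c\<^sub>2 * p\<^sup>2"
  shows "expectation (\<lambda>x. W x ^ n) = exp (c\<^sub>1 * ln r * real n + c\<^sub>2 * ln r * real n ^ 2)"
  using assms r_pos by (simp add: expectation_power powr_def algebra_simps)

end

theorem mainTheorem8:
  fixes M :: "'a measure" and W :: "'a \<Rightarrow> real" and r :: real
    and \<zeta> :: "real \<Rightarrow> real"
  assumes "prob_space M"
    and "W \<in> borel_measurable M"
    and "\<forall>x\<in>space M. W x > 0"
    and "0 < r" and "r < 1"
    and "\<forall>p\<ge>0. integrable M (\<lambda>x. W x powr p) \<and>
                 prob_space.expectation M (\<lambda>x. W x powr p) = r powr \<zeta> p"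
  shows
    "(\<forall>(k::nat) \<beta> dinf.
        (k \<ge> 1 \<and> 0 < \<beta> \<and> \<beta> < 1 \<and>
         ((\<lambda>p. \<zeta> (p + real k) - \<zeta> p) \<longlongrightarrow> dinf) at_top \<and>
         (\<forall>n::nat. \<zeta> (real ((n+1)*k) + real k) - \<zeta> (real ((n+1)*k))
                   = (1 - \<beta>) * dinf + \<beta> * (\<zeta> (real (n*k) + real k) - \<zeta> (real (n*k)))))
        \<longrightarrow>
        (let \<gamma> = dinf / real k;
             C = ((\<zeta> (real k) - \<zeta> 0) - dinf) / (1 - \<beta>)
         in (\<forall>n::nat. ln (prob_space.expectation M (\<lambda>x. W x powr real (n*k)))
                = (\<gamma> * ln r) * real (n*k) + C * ln r * (1 - \<beta> powr (real (n*k) / real k))) \<and>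
            (\<lambda>p::real. C * ln r * (1 - \<beta> powr (p / real k))) \<in> o[at_top](\<lambda>p. p) \<and>
            \<not> summable (\<lambda>p::nat. (prob_space.expectation M (\<lambda>x. W x ^ (2 * (p+1))))
                                     powr (- 1 / (2 * real (p+1)))) \<and>
            moment_determinate (distr M borel W)))
     \<and>
     (\<forall>c\<^sub>1 c\<^sub>2 :: real.
        ((\<forall>p\<ge>0. \<zeta> p = c\<^sub>1 * p + c\<^sub>2 * p^2) \<and> 2 * c\<^sub>2 * ln r > 0)
        \<longrightarrow>
        summable (\<lambda>p::nat. (prob_space.expectation M (\<lambda>x. W x ^ (2 * (p+1))))
                             powr (- 1 / (2 * real (p+1)))) \<and>
        \<not> moment_determinate (distr M borel W))"
proof -
  interpret cascade_multiplier M W r \<zeta>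
    using assms unfolding cascade_multiplier_def cascade_multiplier_axioms_def by blast
  show ?thesis
  proof ((rule conjI; intro allI impI), goal_cases)
    case (1 k \<beta> dinf)
    then have k: "1 \<le> k" and \<beta>: "0 < \<beta>" "\<beta> < 1" by auto
    define C where "C = ((\<zeta> (real k) - \<zeta> 0) - dinf) / (1 - \<beta>)"
    have zeta: "\<zeta> (real (n * k)) = real n * dinf + C * (1 - \<beta> ^ n)" for n
      using zeta_multiples_closed_form[of \<beta> k dinf n] 1 \<beta> by (simp add: C_def zeta_0)
    obtain R where R: "AE x in M. \<bar>W x\<bar> \<le> R"
      using AE_bounded_if_zeta_multiples_closed_form[OF k _ _ zeta] \<beta> by auto
    show ?case
      unfolding Let_def C_def[symmetric]
      using ln_expectation_powr_multiples[OF k \<beta>(1) zeta]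
        powr_correction_in_smallo_id[of \<beta> "real k" "C * ln r"] \<beta> k
        not_summable_carleman_if_AE_bounded[OF R]
        moment_determinate_distr_if_AE_abs_le[OF W_measurable R]
      by simp
  next
    case (2 c\<^sub>1 c\<^sub>2)
    then have b: "0 < c\<^sub>2 * ln r" by simp
    have moments: "expectation (\<lambda>x. W x ^ n) = exp (c\<^sub>1 * ln r * real n + c\<^sub>2 * ln r * real n ^ 2)" for n
      using 2 by (simp add: expectation_power_if_zeta_quadratic)
    show ?case
      unfolding moments
      by (intro conjI summable_carleman_lognormal[OF b]
          not_moment_determinate_if_lognormal_moments[OF b, where a = "c\<^sub>1 * ln r"])
         (simp add: integral_distr_power moments)
  qed
qed

end
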